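(* Let $\mathbf{A},\mathbf{B},\mathbf{C}$ be trees with $\mathbf{A}$ infinite. If $\mathbf{A}\mathbf{B}=\mathbf{A}\mathbf{C}$, then $\mathbf{B}=\mathbf{C}$.
   Context: A tree is a (possibly empty, possibly infinite) rooted in-tree in which every vertex has finitely many in-neighbours: an acyclic weakly connected digraph with a root having no outgoing arc, every other vertex having exactly one outgoing arc (to its parent), arcs directed towards the root. Trees are considered up to isomorphism. The depth of a vertex is its distance to the root. The product of trees $\mathbf{F},\mathbf{G}$ has vertex set $\{(a,b):\operatorname{depth}(a)=\operatorname{depth}(b)\}$ and an arc $(a,b)\to(a',b')$ whenever $a\to a'$ and $b\to b'$ are arcs of $\mathbf{F}$ and $\mathbf{G}$ respectively. *)

theory Defs
  imports Main
begin

text \<open>A tree is represented by a vertex set V and a partial parent map p: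
  p v = Some u means there is an arc v \<rightarrow> u (u is the parent of v);
  p v = None means v has no outgoing arc. Only the values of p on V matter.\<close>

definition arcs :: "'a set \<Rightarrow> ('a \<Rightarrow> 'a option) \<Rightarrow> ('a \<times> 'a) set" where
  "arcs V p = {(v, u). v \<in> V \<and> p v = Some u}"

definition is_tree :: "'a set \<Rightarrow> ('a \<Rightarrow> 'a option) \<Rightarrow> bool" where
  "is_tree V p \<longleftrightarrow>
     (\<forall>(v, u) \<in> arcs V p. u \<in> V) \<and>
     acyclic (arcs V p) \<and>
     (V \<noteq> {} \<longrightarrow> (\<exists>r \<in> V. p r = None \<and> (\<forall>v \<in> V. (v, r) \<in> (arcs V p)\<^sup>*))) \<and>
     (\<forall>v \<in> V. finite {u \<in> V. p u = Some v})"

definition depth :: "'a set \<Rightarrow> ('a \<Rightarrow> 'a option) \<Rightarrow> 'a \<Rightarrow> nat" where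
  "depth V p v = (LEAST n. \<exists>r \<in> V. p r = None \<and> (v, r) \<in> (arcs V p) ^^ n)"

definition tree_prod_verts ::
  "'a set \<Rightarrow> ('a \<Rightarrow> 'a option) \<Rightarrow> 'b set \<Rightarrow> ('b \<Rightarrow> 'b option) \<Rightarrow> ('a \<times> 'b) set" where
  "tree_prod_verts VF pF VG pG =
     {(a, b). a \<in> VF \<and> b \<in> VG \<and> depth VF pF a = depth VG pG b}"

definition tree_prod_par ::
  "('a \<Rightarrow> 'a option) \<Rightarrow> ('b \<Rightarrow> 'b option) \<Rightarrow> ('a \<times> 'b) \<Rightarrow> ('a \<times> 'b) option" where
  "tree_prod_par pF pG = (\<lambda>(a, b). case (pF a, pG b) of
       (Some a', Some b') \<Rightarrow> Some (a', b')
     | _ \<Rightarrow> None)"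

definition tree_iso ::
  "'a set \<Rightarrow> ('a \<Rightarrow> 'a option) \<Rightarrow> 'b set \<Rightarrow> ('b \<Rightarrow> 'b option) \<Rightarrow> bool" where
  "tree_iso V p W q \<longleftrightarrow>
     (\<exists>f. bij_betw f V W \<and>
          (\<forall>x \<in> V. \<forall>y \<in> V. (x, y) \<in> arcs V p \<longleftrightarrow> (f x, f y) \<in> arcs W q))"

end

(*
  Cut at depth n, the subtree below a vertex is a finite unordered tree, i.e. a nested
  multiset, and cutting commutes with products: the depth-n shape of (a, b) in A B is the
  depth-n truncated product of the shapes of a and b. Since A is infinite and locally
  finite, it has a path of every length n from its root (Koenig), and multiplication by a
  tree of height at least n is strictly monotone for a lexicographic order on trees of
  height at most n (truncations first, then children in the multiset order). Hence it
  can be cancelled, and B and C have the same root shapes at every depth. Because every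
  vertex has finitely many children, some bijection between the children of two vertices
  with equal shapes matches shapes at all depths; choosing such bijections level by level
  yields an isomorphism from B to C.
*)

theory Submission
  imports Defs "HOL-Library.Multiset" "HOL-Library.FuncSet" "HOL-Library.Infinite_Set"
begin

section \<open>Products of multisets and finite matchings\<close>

definition Times_mset :: "'a multiset \<Rightarrow> 'b multiset \<Rightarrow> ('a \<times> 'b) multiset" (infixr \<open>\<times>#\<close> 80)
  where "M \<times># N = (\<Sum>x\<in>#M. image_mset (Pair x) N)"

lemma Times_mset_empty_left [simp]: "{#} \<times># N = {#}"
  by (simp add: Times_mset_def)

lemma Times_mset_add_mset_left [simp]: "add_mset x M \<times># N = image_mset (Pair x) N + M \<times># N"
  by (simp add: Times_mset_def)

lemma Times_mset_add_left [simp]: "(A + B) \<times># N = A \<times># N + B \<times># N"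
  by (simp add: Times_mset_def)

lemma Times_mset_add_right [simp]: "M \<times># (A + B) = M \<times># A + M \<times># B"
  by (simp add: Times_mset_def sum_mset.distrib)

lemma set_mset_Times_mset [simp]: "set_mset (M \<times># N) = set_mset M \<times> set_mset N"
  by (induction M) (auto simp: Times_mset_def)

lemma Times_mset_eq_empty_iff: "M \<times># N = {#} \<longleftrightarrow> M = {#} \<or> N = {#}"
  by (metis set_mset_Times_mset set_mset_eq_empty_iff Times_empty)

lemma image_mset_map_prod_Times_mset:
  "image_mset (map_prod f g) (M \<times># N) = image_mset f M \<times># image_mset g N"
  by (induction M) (simp_all add: Times_mset_def multiset.map_comp o_def)

lemma mset_set_Times:
  assumes "finite X" "finite Y"
  shows "mset_set (X \<times> Y) = mset_set X \<times># mset_set Y"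
  using assms(1)
proof (induction X rule: finite_induct)
  case (insert x X)
  have "insert x X \<times> Y = Pair x ` Y \<union> X \<times> Y" and "Pair x ` Y \<inter> X \<times> Y = {}"
    using insert.hyps by auto
  then have "mset_set (insert x X \<times> Y) = mset_set (Pair x ` Y) + mset_set (X \<times> Y)"
    using insert.hyps assms(2) by (simp add: mset_set_Union)
  also have "mset_set (Pair x ` Y) = image_mset (Pair x) (mset_set Y)"
    by (simp add: image_mset_mset_set inj_on_def)
  finally show ?case
    using insert by simp
qed simp

lemma image_mset_mset_set_eq_imp_bij:
  assumes "finite X" "finite Y" "image_mset f (mset_set X) = image_mset g (mset_set Y)"
  shows "\<exists>\<sigma>. bij_betw \<sigma> X Y \<and> (\<forall>x\<in>X. g (\<sigma> x) = f x)"
  using assms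
proof (induction X arbitrary: Y rule: finite_induct)
  case empty
  then have "Y = {}"
    by (simp add: mset_set_empty_iff)
  then show ?case
    by (intro exI[of _ "\<lambda>_. undefined"]) (simp add: bij_betw_def)
next
  case (insert x X)
  have "f x \<in># image_mset g (mset_set Y)"
    using insert.hyps by (simp flip: insert.prems(2))
  then obtain y where y: "y \<in> Y" "g y = f x"
    using insert.prems(1) by auto
  have "mset_set Y = add_mset y (mset_set (Y - {y}))"
    using y(1) insert.prems(1) by (simp add: mset_set.remove)
  with insert.hyps insert.prems(2) y(2)
  have "image_mset f (mset_set X) = image_mset g (mset_set (Y - {y}))"
    by simp
  with insert.IH insert.prems(1) obtain \<sigma> where \<sigma>: "bij_betw \<sigma> X (Y - {y})" "\<forall>x\<in>X. g (\<sigma> x) = f x"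
    by blast
  let ?\<tau> = "\<sigma>(x := y)"
  have "bij_betw ?\<tau> X (Y - {y})"
    using \<sigma>(1) insert.hyps(2) by (metis bij_betw_cong fun_upd_other)
  then have "bij_betw ?\<tau> (X \<union> {x}) ((Y - {y}) \<union> {y})"
    using notIn_Un_bij_betw3[of x X ?\<tau> "Y - {y}"] insert.hyps(2) by simp
  then have "bij_betw ?\<tau> (insert x X) Y"
    using y(1) by (simp add: insert_absorb)
  moreover have "\<forall>z\<in>insert x X. g (?\<tau> z) = f z"
    using \<sigma>(2) y(2) insert.hyps(2) by auto
  ultimately show ?case
    by blast
qed

lemma finite_witnesses_uniform:
  fixes P :: "nat \<Rightarrow> 'a \<Rightarrow> bool"
  assumes "finite S" and witness: "\<And>n. \<exists>s\<in>S. P n s"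
    and down: "\<And>n N s. n \<le> N \<Longrightarrow> P N s \<Longrightarrow> P n s"
  shows "\<exists>s\<in>S. \<forall>n. P n s"
proof -
  have "\<forall>n. \<exists>s. s \<in> S \<and> P n s"
    using witness by blast
  from choice[OF this] obtain w where w: "\<And>n. w n \<in> S \<and> P n (w n)"
    by blast
  then have "finite (range w)"
    using assms(1) by (metis finite_subset image_subsetI)
  then obtain n0 where "infinite {n. w n = w n0}"
    using pigeonhole_infinite[of "UNIV :: nat set" w] by auto
  have "P n (w n0)" for n
  proof -
    obtain N where "n \<le> N" "w N = w n0"
      using \<open>infinite {n. w n = w n0}\<close> by (auto simp: infinite_nat_iff_unbounded_le)
    then show ?thesis
      using w[of N] down by metis
  qed
  with w show ?thesis
    by blast
qed

section \<open>Finite unordered trees and truncated products\<close>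

datatype ftree = FNode (kids: "ftree multiset")

primrec trunc :: "nat \<Rightarrow> ftree \<Rightarrow> ftree" where
  "trunc 0 t = FNode {#}"
| "trunc (Suc n) t = FNode (image_mset (trunc n) (kids t))"

primrec height_ge :: "nat \<Rightarrow> ftree \<Rightarrow> bool" where
  "height_ge 0 t = True"
| "height_ge (Suc n) t = (\<exists>x\<in>#kids t. height_ge n x)"

primrec height_le :: "nat \<Rightarrow> ftree \<Rightarrow> bool" where
  "height_le 0 t = (kids t = {#})"
| "height_le (Suc n) t = (\<forall>x\<in>#kids t. height_le n x)"

primrec ftimes :: "nat \<Rightarrow> ftree \<Rightarrow> ftree \<Rightarrow> ftree" where
  "ftimes 0 x y = FNode {#}"
| "ftimes (Suc n) x y = FNode (image_mset (case_prod (ftimes n)) (kids x \<times># kids y))"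

lemma height_le_trunc: "height_le n (trunc n t)"
  by (induction n arbitrary: t) auto

lemma height_ge_Suc_imp: "height_ge (Suc n) t \<Longrightarrow> height_ge n t"
  by (induction n arbitrary: t) auto

lemma trunc_ftimes: "k \<le> n \<Longrightarrow> trunc k (ftimes n x y) = ftimes k x y"
proof (induction k arbitrary: n x y)
  case (Suc k)
  then obtain n' where "n = Suc n'" "k \<le> n'"
    by (cases n) auto
  then show ?case
    using Suc.IH by (simp add: multiset.map_comp o_def split_def)
qed simp

lemma ftimes_trunc_right:
  assumes "m \<le> k \<or> \<not> height_ge (Suc k) u"
  shows "ftimes m u (trunc k v) = ftimes m u v"
  using assms
proof (induction k arbitrary: m u v)
  case 0
  then show ?case
    by (cases m) (auto simp: Times_mset_eq_empty_iff)
next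
  case (Suc k)
  show ?case
  proof (cases m)
    case (Suc m')
    have "ftimes m' a (trunc k b) = ftimes m' a b" if "a \<in># kids u" for a b
      using Suc.IH Suc.prems that \<open>m = Suc m'\<close> by auto
    then show ?thesis
      using image_mset_map_prod_Times_mset[of id "trunc k" "kids u" "kids v", symmetric]
      by (auto simp: Suc multiset.map_comp o_def intro!: image_mset_cong)
  qed simp
qed

section \<open>Cancellation of truncated products\<close>

primrec ftree_less :: "nat \<Rightarrow> ftree rel" where
  "ftree_less 0 = {}"
| "ftree_less (Suc m) = {(y, y').
     (trunc m y, trunc m y') \<in> ftree_less m \<or>
     (trunc m y = trunc m y' \<and> (kids y, kids y') \<in> mult (ftree_less m))}"

lemma trans_ftree_less: "trans (ftree_less m)"
proof (induction m)
  case (Suc m)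
  moreover have "trans (mult (ftree_less m))"
    unfolding mult_def by (rule trans_trancl)
  ultimately show ?case
    unfolding trans_def by auto
qed (simp add: trans_def)

lemma irrefl_ftree_less: "irrefl (ftree_less m)"
proof (induction m)
  case (Suc m)
  moreover have "irrefl (mult (ftree_less m))"
    using Suc.IH by (rule irrefl_mult[OF trans_ftree_less])
  ultimately show ?case
    unfolding irrefl_def by auto
qed (simp add: irrefl_def)

lemma total_on_ftree_less: "total_on {t. height_le m t} (ftree_less m)"
proof (induction m)
  case 0
  show ?case
    by (auto simp: total_on_def ftree.expand)
next
  case (Suc m)
  have kids: "total_on {M. set_mset M \<subseteq> {t. height_le m t}} (mult (ftree_less m))"
    by (rule total_on_mult[OF Suc.IH trans_ftree_less]) auto
  show ?case
  proof (rule total_onI)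
    fix y y' assume y: "y \<in> {t. height_le (Suc m) t}" and y': "y' \<in> {t. height_le (Suc m) t}"
      and "y \<noteq> y'"
    show "(y, y') \<in> ftree_less (Suc m) \<or> (y', y) \<in> ftree_less (Suc m)"
    proof (cases "trunc m y = trunc m y'")
      case True
      have "kids y \<noteq> kids y'"
        using \<open>y \<noteq> y'\<close> by (cases y; cases y') auto
      with kids y y' have "(kids y, kids y') \<in> mult (ftree_less m) \<or> (kids y', kids y) \<in> mult (ftree_less m)"
        unfolding total_on_def by auto
      with True show ?thesis
        by auto
    next
      case False
      with Suc.IH have "(trunc m y, trunc m y') \<in> ftree_less m \<or> (trunc m y', trunc m y) \<in> ftree_less m"
        unfolding total_on_def by (auto simp: height_le_trunc)
      then show ?thesis
        by auto
    qed
  qed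
qed

lemma ftimes_low_kids_eq:
  assumes "image_mset (trunc k) K = image_mset (trunc k) J"
    and "\<forall>u\<in>#W. \<not> height_ge (Suc k) u"
  shows "image_mset (case_prod (ftimes m)) (W \<times># K) = image_mset (case_prod (ftimes m)) (W \<times># J)"
proof -
  have "image_mset (case_prod (ftimes m)) (W \<times># X)
      = image_mset (case_prod (ftimes m)) (W \<times># image_mset (trunc k) X)" for X
    using assms(2) image_mset_map_prod_Times_mset[of id "trunc k" W X, symmetric]
    by (auto simp: multiset.map_comp o_def ftimes_trunc_right intro!: image_mset_cong)
  then show ?thesis
    using assms(1) by metis
qed

text \<open>Write kids y = I + K and kids y' = I + J with every element of K below one of J.
  Children of w of height below m see K and J only through their truncations, which agree;
  every other child turns the step from K to J into a step between products by monotonicity.\<close>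

lemma ftimes_kids_mult:
  assumes mono: "\<And>u k j. height_ge m u \<Longrightarrow> (k, j) \<in> ftree_less m \<Longrightarrow>
      (ftimes m u k, ftimes m u j) \<in> ftree_less m"
    and w: "height_ge (Suc m) w"
    and trunc_eq: "trunc m y = trunc m y'"
    and kids_less: "(kids y, kids y') \<in> mult (ftree_less m)"
  shows "(kids (ftimes (Suc m) w y), kids (ftimes (Suc m) w y')) \<in> mult (ftree_less m)"
proof -
  obtain I J K where y': "kids y' = I + J" and y: "kids y = I + K" and "J \<noteq> {#}"
    and K_below_J: "\<forall>k\<in>#K. \<exists>j\<in>#J. (k, j) \<in> ftree_less m"
    using mult_implies_one_step[OF trans_ftree_less kids_less] by blast
  let ?F = "image_mset (case_prod (ftimes m))"
  define Wh where "Wh = filter_mset (height_ge m) (kids w)"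
  define Wl where "Wl = filter_mset (\<lambda>u. \<not> height_ge m u) (kids w)"
  have kids_w: "kids w = Wh + Wl"
    unfolding Wh_def Wl_def by (rule multiset_partition)
  have low: "?F (Wl \<times># K) = ?F (Wl \<times># J)"
  proof (cases m)
    case (Suc k)
    from trunc_eq have "image_mset (trunc k) K = image_mset (trunc k) J"
      by (simp add: Suc y y')
    then show ?thesis
      by (rule ftimes_low_kids_eq) (simp add: Wl_def Suc)
  qed (simp add: Wl_def)
  let ?C = "?F (kids w \<times># I) + ?F (Wl \<times># J)"
  have "kids (ftimes (Suc m) w y) = ?C + ?F (Wh \<times># K)"
    and "kids (ftimes (Suc m) w y') = ?C + ?F (Wh \<times># J)"
    unfolding ftimes.simps ftree.sel y y' kids_w by (simp_all add: low)
  moreover have "(?C + ?F (Wh \<times># K), ?C + ?F (Wh \<times># J)) \<in> mult (ftree_less m)"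
  proof (rule one_step_implies_mult)
    show "?F (Wh \<times># J) \<noteq> {#}"
      using w \<open>J \<noteq> {#}\<close> by (auto simp: Wh_def Times_mset_eq_empty_iff)
    show "\<forall>k\<in>#?F (Wh \<times># K). \<exists>j\<in>#?F (Wh \<times># J). (k, j) \<in> ftree_less m"
      using K_below_J mono by (fastforce simp: Wh_def)
  qed
  ultimately show ?thesis
    by simp
qed

lemma ftimes_strict_mono:
  "height_ge m w \<Longrightarrow> (y, y') \<in> ftree_less m \<Longrightarrow> (ftimes m w y, ftimes m w y') \<in> ftree_less m"
proof (induction m arbitrary: w y y')
  case (Suc m)
  have trunc: "trunc m (ftimes (Suc m) w z) = ftimes m w (trunc m z)" for z
    using trunc_ftimes[of m "Suc m" w z] ftimes_trunc_right[of m m w z] by simp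
  from Suc.prems(2) consider
      "(trunc m y, trunc m y') \<in> ftree_less m"
    | "trunc m y = trunc m y'" "(kids y, kids y') \<in> mult (ftree_less m)"
    by auto
  then show ?case
  proof cases
    case 1
    then show ?thesis
      using Suc.IH[OF height_ge_Suc_imp[OF Suc.prems(1)]] by (simp add: trunc del: ftimes.simps)
  next
    case 2
    then show ?thesis
      using ftimes_kids_mult[OF Suc.IH Suc.prems(1)] by (simp add: trunc del: ftimes.simps)
  qed
qed simp

theorem ftimes_cancel:
  assumes "height_ge n a" "height_le n b" "height_le n c" "ftimes n a b = ftimes n a c"
  shows "b = c"
proof (rule ccontr)
  assume "b \<noteq> c"
  with assms(2,3) have "(b, c) \<in> ftree_less n \<or> (c, b) \<in> ftree_less n"
    using total_on_ftree_less[of n] unfolding total_on_def by auto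
  then have "(ftimes n a b, ftimes n a c) \<in> ftree_less n \<or> (ftimes n a c, ftimes n a b) \<in> ftree_less n"
    using ftimes_strict_mono[OF assms(1)] by blast
  with assms(4) show False
    using irrefl_ftree_less[of n] unfolding irrefl_def by auto
qed

section \<open>Rooted trees and shapes of subtrees\<close>

definition children :: "'a set \<Rightarrow> ('a \<Rightarrow> 'a option) \<Rightarrow> 'a \<Rightarrow> 'a set" where
  "children V p v = {u \<in> V. p u = Some v}"

primrec subtree_shape :: "'a set \<Rightarrow> ('a \<Rightarrow> 'a option) \<Rightarrow> nat \<Rightarrow> 'a \<Rightarrow> ftree" where
  "subtree_shape V p 0 v = FNode {#}"
| "subtree_shape V p (Suc n) v =
     FNode (image_mset (subtree_shape V p n) (mset_set (children V p v)))"

lemma height_le_subtree_shape: "height_le n (subtree_shape V p n v)"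
  by (induction n arbitrary: v) auto

lemma trunc_subtree_shape: "n \<le> N \<Longrightarrow> trunc n (subtree_shape V p N v) = subtree_shape V p n v"
proof (induction n arbitrary: N v)
  case (Suc n)
  then obtain N' where "N = Suc N'" "n \<le> N'"
    by (cases N) auto
  with Suc.IH show ?case
    by (simp add: multiset.map_comp o_def)
qed simp

definition tree_root :: "'a set \<Rightarrow> ('a \<Rightarrow> 'a option) \<Rightarrow> 'a" where
  "tree_root V p = (THE r. r \<in> V \<and> p r = None)"

locale rooted_tree =
  fixes V :: "'a set" and p :: "'a \<Rightarrow> 'a option"
  assumes is_tree: "is_tree V p"
begin

abbreviation "E \<equiv> arcs V p"
abbreviation "root \<equiv> tree_root V p"

lemma arc_iff: "(v, u) \<in> E \<longleftrightarrow> v \<in> V \<and> p v = Some u"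
  by (simp add: arcs_def)

lemma parent_in: "v \<in> V \<Longrightarrow> p v = Some u \<Longrightarrow> u \<in> V"
  using is_tree unfolding is_tree_def arcs_def by auto

lemma finite_children: "finite (children V p v)"
proof (cases "v \<in> V")
  case True
  then show ?thesis
    using is_tree unfolding is_tree_def children_def by auto
next
  case False
  then have "children V p v = {}"
    using parent_in by (auto simp: children_def)
  then show ?thesis
    by simp
qed

lemma parentless_unique:
  assumes "r \<in> V" "p r = None" "r' \<in> V" "p r' = None"
  shows "r = r'"
proof -
  obtain r0 where "\<forall>v\<in>V. (v, r0) \<in> E\<^sup>*"
    using is_tree assms(1) unfolding is_tree_def by blast
  then have "v = r0" if "v \<in> V" "p v = None" for v
    using that by (metis arc_iff converse_rtranclE option.distinct(1))
  with assms show ?thesis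
    by metis
qed

lemma root_spec:
  assumes "V \<noteq> {}"
  shows root_in: "root \<in> V" and parent_root: "p root = None"
    and rtrancl_root: "v \<in> V \<Longrightarrow> (v, root) \<in> E\<^sup>*"
proof -
  obtain r where r: "r \<in> V" "p r = None" "\<forall>v\<in>V. (v, r) \<in> E\<^sup>*"
    using is_tree assms unfolding is_tree_def by blast
  moreover have "root = r"
    unfolding tree_root_def using r parentless_unique by blast
  ultimately show "root \<in> V" "p root = None" "v \<in> V \<Longrightarrow> (v, root) \<in> E\<^sup>*"
    by auto
qed

lemma eq_root: "v \<in> V \<Longrightarrow> p v = None \<Longrightarrow> v = root"
  using parentless_unique root_in parent_root by blast

lemma relpow_functional: "(v, x) \<in> E ^^ n \<Longrightarrow> (v, y) \<in> E ^^ n \<Longrightarrow> x = y"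
proof (induction n arbitrary: v)
  case (Suc n)
  from Suc.prems obtain a b where "(v, a) \<in> E" "(a, x) \<in> E ^^ n" "(v, b) \<in> E" "(b, y) \<in> E ^^ n"
    by (meson relpow_Suc_D2)
  with Suc.IH show ?case
    by (metis arc_iff option.inject)
qed simp

lemma relpow_root_length_unique:
  assumes "(v, root) \<in> E ^^ n" "(v, root) \<in> E ^^ m" "n < m"
  shows False
proof -
  from assms(2,3) obtain z where "(v, z) \<in> E ^^ n" "(z, root) \<in> E ^^ Suc (m - n - 1)"
    using relpow_add[of n "Suc (m - n - 1)" E] by (auto simp: Suc_diff_Suc)
  then obtain y where "(root, y) \<in> E"
    using assms(1) relpow_functional by (metis relpow_Suc_D2)
  then show False
    using parent_root by (auto simp: arc_iff)
qed

lemma depth_eqI: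
  assumes "v \<in> V" "(v, root) \<in> E ^^ n"
  shows "depth V p v = n"
  unfolding depth_def
proof (rule Least_equality)
  show "\<exists>r\<in>V. p r = None \<and> (v, r) \<in> E ^^ n"
    using assms root_in parent_root by blast
next
  fix m assume "\<exists>r\<in>V. p r = None \<and> (v, r) \<in> E ^^ m"
  then have "(v, root) \<in> E ^^ m"
    using eq_root by blast
  then show "n \<le> m"
    using assms(2) relpow_root_length_unique not_le by blast
qed

lemma relpow_depth: "v \<in> V \<Longrightarrow> (v, root) \<in> E ^^ depth V p v"
  using depth_eqI rtrancl_root rtrancl_power by (metis empty_iff)

lemma depth_child: "u \<in> V \<Longrightarrow> p u = Some v \<Longrightarrow> depth V p u = Suc (depth V p v)"
  using relpow_Suc_I2[of u v E] relpow_depth[of v] depth_eqI parent_in arc_iff by metis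

lemma depth_eq_0_iff: "v \<in> V \<Longrightarrow> depth V p v = 0 \<longleftrightarrow> v = root"
  using relpow_depth[of v] depth_eqI[of v 0] by auto

lemma depth_SucE:
  assumes "v \<in> V" "depth V p v = Suc d"
  obtains u where "p v = Some u" "u \<in> V" "depth V p u = d"
proof -
  have "p v \<noteq> None"
    using assms eq_root depth_eq_0_iff by force
  then obtain u where "p v = Some u"
    by blast
  with assms that show ?thesis
    using parent_in depth_child by force
qed

lemma finite_level: "finite {v \<in> V. depth V p v = n}"
proof (induction n)
  case 0
  have "{v \<in> V. depth V p v = 0} \<subseteq> {root}"
    using depth_eq_0_iff by blast
  then show ?case
    using finite_subset by blast
next
  case (Suc n)
  have "{v \<in> V. depth V p v = Suc n} \<subseteq> (\<Union>u\<in>{u \<in> V. depth V p u = n}. children V p u)"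
  proof
    fix v assume "v \<in> {v \<in> V. depth V p v = Suc n}"
    then obtain u where "v \<in> V" "p v = Some u" "u \<in> V" "depth V p u = n"
      by (auto elim: depth_SucE)
    then show "v \<in> (\<Union>u\<in>{u \<in> V. depth V p u = n}. children V p u)"
      by (auto simp: children_def)
  qed
  then show ?case
    using Suc.IH finite_children by (meson finite_UN_I finite_subset)
qed

lemma level_nonempty: "v \<in> V \<Longrightarrow> n \<le> depth V p v \<Longrightarrow> \<exists>w\<in>V. depth V p w = n"
proof (induction "depth V p v" arbitrary: v)
  case (Suc d)
  show ?case
  proof (cases "n = depth V p v")
    case False
    from Suc.prems(1) Suc.hyps(2)[symmetric] obtain u where "u \<in> V" "depth V p u = d"
      by (rule depth_SucE)
    with Suc False show ?thesis
      by auto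
  qed (use Suc.prems in blast)
qed auto

lemma infinite_level_nonempty:
  assumes "infinite V"
  shows "\<exists>w\<in>V. depth V p w = n"
proof (rule ccontr)
  assume "\<not> ?thesis"
  then have "depth V p v < n" if "v \<in> V" for v
    using level_nonempty[OF that] by (meson not_le)
  then have "V \<subseteq> (\<Union>k<n. {v \<in> V. depth V p v = k})"
    by blast
  moreover have "finite (\<Union>k<n. {v \<in> V. depth V p v = k})"
    by (intro finite_UN_I finite_lessThan finite_level)
  ultimately show False
    using assms finite_subset by blast
qed

lemma height_ge_subtree_shape: "(w, v) \<in> E ^^ n \<Longrightarrow> height_ge n (subtree_shape V p n v)"
proof (induction n arbitrary: v)
  case (Suc n)
  then obtain u where "(w, u) \<in> E ^^ n" "u \<in> children V p v"
    by (auto simp: children_def arc_iff elim: relpow_Suc_E)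
  with Suc.IH show ?case
    using finite_children by auto
qed simp

lemma height_ge_root_shape: "infinite V \<Longrightarrow> height_ge n (subtree_shape V p n root)"
  using infinite_level_nonempty relpow_depth height_ge_subtree_shape by metis

end

section \<open>Isomorphisms of trees\<close>

context
  fixes f :: "'a \<Rightarrow> 'b" and V p W q
  assumes bij: "bij_betw f V W"
    and arcs: "\<forall>x\<in>V. \<forall>y\<in>V. (x, y) \<in> arcs V p \<longleftrightarrow> (f x, f y) \<in> arcs W q"
begin

lemma children_iso:
  assumes "v \<in> V"
  shows "children W q (f v) = f ` children V p v"
proof (intro set_eqI iffI)
  fix w assume "w \<in> children W q (f v)"
  then obtain u where "u \<in> V" "w = f u" "(f u, f v) \<in> arcs W q"
    using bij by (auto simp: children_def arcs_def bij_betw_def)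
  with arcs assms show "w \<in> f ` children V p v"
    by (auto simp: children_def arcs_def)
next
  fix w assume "w \<in> f ` children V p v"
  then obtain u where "u \<in> V" "w = f u" "(u, v) \<in> arcs V p"
    by (auto simp: children_def arcs_def)
  with arcs assms bij show "w \<in> children W q (f v)"
    by (auto simp: children_def arcs_def bij_betw_def)
qed

lemma subtree_shape_iso: "v \<in> V \<Longrightarrow> subtree_shape W q n (f v) = subtree_shape V p n v"
proof (induction n arbitrary: v)
  case (Suc n)
  have sub: "children V p v \<subseteq> V"
    by (auto simp: children_def)
  then have "inj_on f (children V p v)"
    using bij inj_on_subset[OF bij_betw_imp_inj_on] by blast
  then have "mset_set (children W q (f v)) = image_mset f (mset_set (children V p v))"
    by (simp add: children_iso[OF Suc.prems] image_mset_mset_set)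
  with Suc.IH sub show ?case
    by (cases "finite (children V p v)") (auto simp: multiset.map_comp o_def intro!: image_mset_cong)
qed simp

lemma parentless_iso:
  assumes V_closed: "\<And>v u. v \<in> V \<Longrightarrow> p v = Some u \<Longrightarrow> u \<in> V"
    and W_closed: "\<And>w u. w \<in> W \<Longrightarrow> q w = Some u \<Longrightarrow> u \<in> W"
    and "v \<in> V"
  shows "p v = None \<longleftrightarrow> q (f v) = None"
proof
  assume "q (f v) = None"
  show "p v = None"
  proof (rule ccontr)
    assume "p v \<noteq> None"
    then obtain u where "p v = Some u" "u \<in> V"
      using V_closed \<open>v \<in> V\<close> by blast
    then have "(f v, f u) \<in> arcs W q"
      using arcs \<open>v \<in> V\<close> by (simp add: arcs_def)
    with \<open>q (f v) = None\<close> show False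
      by (simp add: arcs_def)
  qed
next
  assume "p v = None"
  show "q (f v) = None"
  proof (rule ccontr)
    assume "q (f v) \<noteq> None"
    then obtain w where "q (f v) = Some w" "w \<in> W"
      using W_closed bij_betw_apply[OF bij \<open>v \<in> V\<close>] by blast
    then obtain u where "u \<in> V" "(f v, f u) \<in> arcs W q"
      using bij bij_betw_apply[OF bij \<open>v \<in> V\<close>] by (auto simp: bij_betw_def arcs_def)
    then have "(v, u) \<in> arcs V p"
      using arcs \<open>v \<in> V\<close> by blast
    with \<open>p v = None\<close> show False
      by (simp add: arcs_def)
  qed
qed

end

locale tree_pair = T1: rooted_tree V p + T2: rooted_tree W q
  for V :: "'a set" and p and W :: "'b set" and q
begin

lemma children_matching:
  assumes "\<And>n. subtree_shape V p n v = subtree_shape W q n w"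
  shows "\<exists>\<sigma>. bij_betw \<sigma> (children V p v) (children W q w) \<and>
    (\<forall>x\<in>children V p v. \<forall>n. subtree_shape V p n x = subtree_shape W q n (\<sigma> x))"
proof -
  let ?X = "children V p v" and ?Y = "children W q w"
  let ?P = "\<lambda>n \<sigma>. bij_betw \<sigma> ?X ?Y \<and> (\<forall>x\<in>?X. subtree_shape V p n x = subtree_shape W q n (\<sigma> x))"
  have fin: "finite ?X" "finite ?Y"
    using T1.finite_children T2.finite_children by auto
  have "\<exists>\<sigma>\<in>?X \<rightarrow>\<^sub>E ?Y. ?P n \<sigma>" for n
  proof -
    have "image_mset (subtree_shape V p n) (mset_set ?X) = image_mset (subtree_shape W q n) (mset_set ?Y)"
      using assms[of "Suc n"] by simp
    then obtain \<sigma> where "?P n \<sigma>"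
      using image_mset_mset_set_eq_imp_bij[OF fin] by metis
    then have "?P n (restrict \<sigma> ?X)"
      by (simp add: bij_betw_def inj_on_def)
    moreover have "restrict \<sigma> ?X \<in> ?X \<rightarrow>\<^sub>E ?Y"
      using \<open>?P n \<sigma>\<close> by (auto simp: bij_betw_def)
    ultimately show ?thesis
      by blast
  qed
  moreover have "?P n \<sigma>" if "n \<le> N" "?P N \<sigma>" for n N \<sigma>
    using that trunc_subtree_shape by metis
  ultimately show ?thesis
    using finite_witnesses_uniform[of "?X \<rightarrow>\<^sub>E ?Y" ?P] fin by (auto simp: finite_PiE)
qed

context
  fixes g :: "'a \<Rightarrow> 'b"
  assumes nonempty: "V \<noteq> {}" "W \<noteq> {}"
    and g_root: "g T1.root = T2.root"
    and g_children: "\<And>v. v \<in> V \<Longrightarrow> bij_betw g (children V p v) (children W q (g v))"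
begin

lemma child_map: "v \<in> V \<Longrightarrow> p v = Some u \<Longrightarrow> g v \<in> W \<and> q (g v) = Some (g u)"
  using bij_betw_apply[OF g_children[OF T1.parent_in]] by (auto simp: children_def)

lemma map_in_depth: "v \<in> V \<Longrightarrow> g v \<in> W \<and> depth W q (g v) = depth V p v"
proof (induction "depth V p v" arbitrary: v)
  case 0
  then have "v = T1.root"
    using T1.depth_eq_0_iff by simp
  moreover have "T2.root \<in> W" "depth W q T2.root = 0"
    using T2.root_in T2.depth_eq_0_iff nonempty(2) by auto
  ultimately show ?case
    using 0 g_root by simp
next
  case (Suc d)
  from Suc.prems Suc.hyps(2)[symmetric] obtain u where u: "p v = Some u" "u \<in> V" "depth V p u = d"
    by (rule T1.depth_SucE)
  with Suc.prems have "g v \<in> W" "q (g v) = Some (g u)"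
    using child_map by auto
  with Suc.hyps(1)[OF u(3)[symmetric] u(2)] Suc.hyps(2) show ?case
    using T2.depth_child u(3) by simp
qed

lemma inj_on_map: "inj_on g V"
proof -
  have "v = v'" if "v \<in> V" "v' \<in> V" "g v = g v'" for v v'
    using that
  proof (induction "depth V p v" arbitrary: v v')
    case 0
    then show ?case
      using map_in_depth T1.depth_eq_0_iff by metis
  next
    case (Suc d)
    from Suc.prems(1) Suc.hyps(2)[symmetric] obtain u where u: "p v = Some u" "u \<in> V" "depth V p u = d"
      by (rule T1.depth_SucE)
    have "depth V p v' = Suc d"
      using Suc.prems Suc.hyps(2) map_in_depth by metis
    with Suc.prems(2) obtain u' where u': "p v' = Some u'" "u' \<in> V"
      by (rule T1.depth_SucE)
    have "g u = g u'"
      using child_map[OF Suc.prems(1) u(1)] child_map[OF Suc.prems(2) u'(1)] Suc.prems(3) by simp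
    then have "u = u'"
      using Suc.hyps(1)[OF u(3)[symmetric] u(2) u'(2)] by blast
    then have "v \<in> children V p u" "v' \<in> children V p u"
      using Suc.prems u u' by (auto simp: children_def)
    with Suc.prems(3) show ?case
      using g_children[OF u(2)] by (auto simp: bij_betw_def dest: inj_onD)
  qed
  then show ?thesis
    by (rule inj_onI)
qed

lemma map_onto: "g ` V = W"
proof -
  have "w \<in> g ` V" if "w \<in> W" for w
    using that
  proof (induction "depth W q w" arbitrary: w)
    case 0
    then have "w = g T1.root"
      using T2.depth_eq_0_iff g_root by simp
    then show ?case
      using T1.root_in nonempty(1) by blast
  next
    case (Suc d)
    from Suc.prems Suc.hyps(2)[symmetric] obtain u where u: "q w = Some u" "u \<in> W" "depth W q u = d"
      by (rule T2.depth_SucE)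
    then obtain v where v: "v \<in> V" "u = g v"
      using Suc.hyps(1) by blast
    with Suc.prems u have "w \<in> children W q (g v)"
      by (simp add: children_def)
    then have "w \<in> g ` children V p v"
      using g_children[OF v(1)] by (simp add: bij_betw_def)
    then show ?case
      by (auto simp: children_def)
  qed
  then show ?thesis
    using map_in_depth by blast
qed

lemma tree_iso_map: "tree_iso V p W q"
  unfolding tree_iso_def
proof (intro exI conjI ballI)
  show "bij_betw g V W"
    using inj_on_map map_onto by (simp add: bij_betw_def)
  fix x y assume "x \<in> V" "y \<in> V"
  show "(x, y) \<in> arcs V p \<longleftrightarrow> (g x, g y) \<in> arcs W q"
  proof
    assume "(x, y) \<in> arcs V p"
    then show "(g x, g y) \<in> arcs W q"
      using child_map by (simp add: arcs_def)
  next
    assume arc: "(g x, g y) \<in> arcs W q"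
    have "p x \<noteq> None"
    proof
      assume "p x = None"
      then have "g x = T2.root"
        using \<open>x \<in> V\<close> T1.eq_root g_root by blast
      with arc show False
        using T2.parent_root nonempty(2) by (simp add: arcs_def)
    qed
    then obtain u where u: "p x = Some u"
      by blast
    then have "g y = g u"
      using arc child_map[OF \<open>x \<in> V\<close> u] by (auto simp: arcs_def)
    then have "y = u"
      using inj_on_map \<open>y \<in> V\<close> T1.parent_in[OF \<open>x \<in> V\<close> u] by (meson inj_onD)
    with \<open>x \<in> V\<close> u show "(x, y) \<in> arcs V p"
      by (simp add: arcs_def)
  qed
qed

end

theorem tree_iso_if_root_shapes_eq:
  assumes "V \<noteq> {}" "W \<noteq> {}"
    and root_shapes: "\<And>n. subtree_shape V p n T1.root = subtree_shape W q n T2.root"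
  shows "tree_iso V p W q"
proof -
  let ?equiv = "\<lambda>v w. \<forall>n. subtree_shape V p n v = subtree_shape W q n w"
  obtain \<sigma> where \<sigma>: "\<And>v w. ?equiv v w \<Longrightarrow> bij_betw (\<sigma> v w) (children V p v) (children W q w) \<and>
      (\<forall>x\<in>children V p v. ?equiv x (\<sigma> v w x))"
    using children_matching by metis
  \<comment> \<open>h n v is the image of a vertex v of depth n, chosen along the path from the root to v.\<close>
  define h where "h = rec_nat (\<lambda>_. T2.root) (\<lambda>_ h v. \<sigma> (the (p v)) (h (the (p v))) v)"
  define g where "g v = h (depth V p v) v" for v
  have "depth V p T1.root = 0"
    using assms(1) T1.root_in T1.depth_eq_0_iff by blast
  then have g_root: "g T1.root = T2.root"
    by (simp add: g_def h_def)
  have g_child: "g v = \<sigma> u (g u) v" if "v \<in> V" "p v = Some u" for v u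
    using that T1.depth_child by (simp add: g_def h_def)
  have equiv: "?equiv v (g v)" if "v \<in> V" for v
    using that
  proof (induction "depth V p v" arbitrary: v)
    case 0
    then show ?case
      using root_shapes g_root T1.depth_eq_0_iff by metis
  next
    case (Suc d)
    from Suc.prems Suc.hyps(2)[symmetric] obtain u where u: "p v = Some u" "u \<in> V" "depth V p u = d"
      by (rule T1.depth_SucE)
    then have "?equiv u (g u)"
      using Suc.hyps(1) by simp
    moreover have "v \<in> children V p u"
      using Suc.prems u by (simp add: children_def)
    ultimately show ?case
      using \<sigma> g_child[OF Suc.prems u(1)] by simp
  qed
  have "bij_betw g (children V p v) (children W q (g v))" if "v \<in> V" for v
  proof -
    have "g x = \<sigma> v (g v) x" if "x \<in> children V p v" for x
      using that g_child by (simp add: children_def)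
    then show ?thesis
      using \<sigma>[OF equiv[OF \<open>v \<in> V\<close>]] bij_betw_cong[of "children V p v" g "\<sigma> v (g v)"] by blast
  qed
  with assms(1,2) g_root show ?thesis
    by (rule tree_iso_map)
qed

end

section \<open>Products of trees\<close>

lemma tree_prod_par_eq_Some_iff:
  "tree_prod_par p q (a, b) = Some (a', b') \<longleftrightarrow> p a = Some a' \<and> q b = Some b'"
  by (auto simp: tree_prod_par_def split: option.splits)

lemma tree_prod_par_eq_None_iff: "tree_prod_par p q (a, b) = None \<longleftrightarrow> p a = None \<or> q b = None"
  by (auto simp: tree_prod_par_def split: option.splits)

context tree_pair
begin

lemma tree_prod_parent_in:
  assumes "v \<in> tree_prod_verts V p W q" "tree_prod_par p q v = Some u"
  shows "u \<in> tree_prod_verts V p W q"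
proof -
  obtain a b a' b' where "v = (a, b)" "u = (a', b')"
    by fastforce
  with assms show ?thesis
    using T1.parent_in T2.parent_in T1.depth_child T2.depth_child
    by (auto simp: tree_prod_verts_def tree_prod_par_eq_Some_iff)
qed

lemma children_tree_prod:
  assumes "(a, b) \<in> tree_prod_verts V p W q"
  shows "children (tree_prod_verts V p W q) (tree_prod_par p q) (a, b) = children V p a \<times> children W q b"
  using assms T1.depth_child T2.depth_child
  by (auto simp: children_def tree_prod_verts_def tree_prod_par_eq_Some_iff)

lemma subtree_shape_tree_prod:
  "(a, b) \<in> tree_prod_verts V p W q \<Longrightarrow> subtree_shape (tree_prod_verts V p W q) (tree_prod_par p q) n (a, b)
     = ftimes n (subtree_shape V p n a) (subtree_shape W q n b)"
proof (induction n arbitrary: a b)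
  case (Suc n)
  have "children V p a \<times> children W q b \<subseteq> tree_prod_verts V p W q"
    using children_tree_prod[OF Suc.prems] by (auto simp: children_def)
  with Suc show ?case
    using T1.finite_children T2.finite_children
    by (auto simp: children_tree_prod mset_set_Times image_mset_map_prod_Times_mset[symmetric]
        multiset.map_comp o_def split_def subsetD intro!: image_mset_cong)
qed simp

lemma root_in_tree_prod: "V \<noteq> {} \<Longrightarrow> W \<noteq> {} \<Longrightarrow> (T1.root, T2.root) \<in> tree_prod_verts V p W q"
  using T1.root_in T2.root_in T1.depth_eq_0_iff[of T1.root] T2.depth_eq_0_iff[of T2.root]
  by (simp add: tree_prod_verts_def)

lemma tree_prod_verts_empty_iff: "V \<noteq> {} \<Longrightarrow> tree_prod_verts V p W q = {} \<longleftrightarrow> W = {}"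
  using root_in_tree_prod by (auto simp: tree_prod_verts_def)

lemma tree_prod_parentless:
  assumes "(a, b) \<in> tree_prod_verts V p W q" "tree_prod_par p q (a, b) = None"
  shows "a = T1.root \<and> b = T2.root"
proof -
  have ab: "a \<in> V" "b \<in> W" "depth V p a = depth W q b"
    using assms(1) by (auto simp: tree_prod_verts_def)
  have "a = T1.root \<or> b = T2.root"
    using assms(2) ab T1.eq_root T2.eq_root by (auto simp: tree_prod_par_eq_None_iff)
  then have "depth V p a = 0"
    using ab T1.depth_eq_0_iff[of a] T2.depth_eq_0_iff[of b] by auto
  then show ?thesis
    using ab T1.depth_eq_0_iff[of a] T2.depth_eq_0_iff[of b] by auto
qed

end

theorem mainTheorem11:
  fixes VA :: "'a set" and pA :: "'a \<Rightarrow> 'a option"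
    and VB :: "'b set" and pB :: "'b \<Rightarrow> 'b option"
    and VC :: "'c set" and pC :: "'c \<Rightarrow> 'c option"
  assumes "is_tree VA pA" and "is_tree VB pB" and "is_tree VC pC"
    and "infinite VA"
    and "tree_iso (tree_prod_verts VA pA VB pB) (tree_prod_par pA pB)
                  (tree_prod_verts VA pA VC pC) (tree_prod_par pA pC)"
  shows "tree_iso VB pB VC pC"
proof -
  interpret AB: tree_pair VA pA VB pB + AC: tree_pair VA pA VC pC + BC: tree_pair VB pB VC pC
    using assms(1-3) by (simp_all add: tree_pair_def rooted_tree_def)
  let ?PB = "tree_prod_verts VA pA VB pB" and ?PC = "tree_prod_verts VA pA VC pC"
  let ?rA = "tree_root VA pA" and ?rB = "tree_root VB pB" and ?rC = "tree_root VC pC"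
  obtain f where f: "bij_betw f ?PB ?PC"
    and arcs: "\<forall>x\<in>?PB. \<forall>y\<in>?PB. (x, y) \<in> arcs ?PB (tree_prod_par pA pB) \<longleftrightarrow>
      (f x, f y) \<in> arcs ?PC (tree_prod_par pA pC)"
    using assms(5) unfolding tree_iso_def by blast
  have "VA \<noteq> {}"
    using assms(4) by auto
  then have "VB = {} \<longleftrightarrow> VC = {}"
    using f AB.tree_prod_verts_empty_iff AC.tree_prod_verts_empty_iff by (auto simp: bij_betw_def)
  show ?thesis
  proof (cases "VB = {}")
    case True
    with \<open>VB = {} \<longleftrightarrow> VC = {}\<close> show ?thesis
      unfolding tree_iso_def by (intro exI[of _ "\<lambda>_. undefined"]) (simp add: bij_betw_def)
  next
    case False
    with \<open>VB = {} \<longleftrightarrow> VC = {}\<close> have "VC \<noteq> {}"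
      by blast
    have root_B: "(?rA, ?rB) \<in> ?PB" and root_C: "(?rA, ?rC) \<in> ?PC"
      using AB.root_in_tree_prod AC.root_in_tree_prod \<open>VA \<noteq> {}\<close> False \<open>VC \<noteq> {}\<close> by auto
    have "tree_prod_par pA pB (?rA, ?rB) = None"
      using AB.T1.parent_root \<open>VA \<noteq> {}\<close> by (simp add: tree_prod_par_eq_None_iff)
    then have "tree_prod_par pA pC (f (?rA, ?rB)) = None"
      using parentless_iso[OF f arcs AB.tree_prod_parent_in AC.tree_prod_parent_in root_B] by simp
    then have f_root: "f (?rA, ?rB) = (?rA, ?rC)"
      using bij_betw_apply[OF f root_B] AC.tree_prod_parentless by (cases "f (?rA, ?rB)") auto
    have "ftimes n (subtree_shape VA pA n ?rA) (subtree_shape VB pB n ?rB)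
        = ftimes n (subtree_shape VA pA n ?rA) (subtree_shape VC pC n ?rC)" for n
    proof -
      have "ftimes n (subtree_shape VA pA n ?rA) (subtree_shape VB pB n ?rB)
          = subtree_shape ?PB (tree_prod_par pA pB) n (?rA, ?rB)"
        using AB.subtree_shape_tree_prod[OF root_B] by simp
      also have "\<dots> = subtree_shape ?PC (tree_prod_par pA pC) n (?rA, ?rC)"
        using subtree_shape_iso[OF f arcs root_B] f_root by simp
      also have "\<dots> = ftimes n (subtree_shape VA pA n ?rA) (subtree_shape VC pC n ?rC)"
        using AC.subtree_shape_tree_prod[OF root_C] by simp
      finally show ?thesis .
    qed
    then have "subtree_shape VB pB n ?rB = subtree_shape VC pC n ?rC" for n
      by (rule ftimes_cancel[OF AB.T1.height_ge_root_shape[OF assms(4)]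
            height_le_subtree_shape height_le_subtree_shape])
    with False \<open>VC \<noteq> {}\<close> show ?thesis
      by (rule BC.tree_iso_if_root_shapes_eq)
  qed
qed

end
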